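(* Let $S\subseteq\mathbb{R}^+\cup\{0\}$ with $S\neq\emptyset$, and let $\mathbf{P}=(X,P)$ be a finite poset belonging to $C(S)$. (1) If $\mathbf{P}$ has a twin-free $S$-representation, then $\mathbf{P}$ has a distinguishing $S$-representation. (2) If $0\notin S$, then $\mathbf{P}$ has a distinguishing $S$-representation.
   Context: An interval representation of a poset $(X,P)$ assigns to each $x\in X$ a closed real interval $[l_x,r_x]$ (with $l_x\le r_x$; length $r_x-l_x$, possibly $0$) such that for all $x,y\in X$: $x<y$ in $P$ if and only if $r_x<l_y$. For $S\subseteq\mathbb{R}^+\cup\{0\}$, an $S$-representation is an interval representation in which every interval length lies in $S$, and $C(S)$ is the class of posets having an $S$-representation. A representation is twin-free if no two distinct elements of $X$ are assigned the same interval. A representation is distinguishing if every real number occurs at most once as an endpoint of an interval of the representation, i.e. no two intervals share an endpoint. *)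

theory Defs
  imports Main "HOL-Library.Product_Plus" Complex_Main
begin

definition strict_poset :: "'a set \<Rightarrow> ('a \<Rightarrow> 'a \<Rightarrow> bool) \<Rightarrow> bool" where
  "strict_poset X P \<longleftrightarrow>
     (\<forall>x\<in>X. \<not> P x x) \<and>
     (\<forall>x\<in>X. \<forall>y\<in>X. \<forall>z\<in>X. P x y \<longrightarrow> P y z \<longrightarrow> P x z)"

definition interval_rep :: "'a set \<Rightarrow> ('a \<Rightarrow> 'a \<Rightarrow> bool) \<Rightarrow> ('a \<Rightarrow> real) \<Rightarrow> ('a \<Rightarrow> real) \<Rightarrow> bool" where
  "interval_rep X P l r \<longleftrightarrow>
     (\<forall>x\<in>X. l x \<le> r x) \<and> (\<forall>x\<in>X. \<forall>y\<in>X. P x y \<longleftrightarrow> r x < l y)"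

definition S_rep :: "real set \<Rightarrow> 'a set \<Rightarrow> ('a \<Rightarrow> 'a \<Rightarrow> bool) \<Rightarrow> ('a \<Rightarrow> real) \<Rightarrow> ('a \<Rightarrow> real) \<Rightarrow> bool" where
  "S_rep S X P l r \<longleftrightarrow> interval_rep X P l r \<and> (\<forall>x\<in>X. r x - l x \<in> S)"

definition in_C :: "real set \<Rightarrow> 'a set \<Rightarrow> ('a \<Rightarrow> 'a \<Rightarrow> bool) \<Rightarrow> bool" where
  "in_C S X P \<longleftrightarrow> (\<exists>l r. S_rep S X P l r)"

definition twin_free :: "'a set \<Rightarrow> ('a \<Rightarrow> real) \<Rightarrow> ('a \<Rightarrow> real) \<Rightarrow> bool" where
  "twin_free X l r \<longleftrightarrow> (\<forall>x\<in>X. \<forall>y\<in>X. x \<noteq> y \<longrightarrow> (l x, r x) \<noteq> (l y, r y))"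

definition distinguishing :: "'a set \<Rightarrow> ('a \<Rightarrow> real) \<Rightarrow> ('a \<Rightarrow> real) \<Rightarrow> bool" where
  "distinguishing X l r \<longleftrightarrow> (\<forall>x\<in>X. \<forall>y\<in>X. x \<noteq> y \<longrightarrow> {l x, r x} \<inter> {l y, r y} = {})"

end

theory Submission
  imports Defs "HOL-Library.Product_Lexorder"
begin

text \<open>Translate every interval of a representation by
  \<open>t \<cdot> -(l x + r x) + t\<^sup>2 \<cdot> g x\<close>, with \<open>g\<close> injective on \<open>X\<close>.
  Translations keep all lengths. For small \<open>t > 0\<close> the strict relations
  \<open>r x < l y\<close> and \<open>r x > l y\<close> survive; when two intervals touch
  (\<open>r x = l y\<close>) the interval with the smaller midpoint moves further to the
  right, so they start to overlap, as the relation requires; and the second-order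
  term separates any endpoints still shared. The only obstruction is a pair of
  distinct elements represented by the same one-point interval, since their
  midpoints coincide; this is excluded both by twin-freeness and by \<open>0 \<notin> S\<close>.
  Neither the order axioms of \<open>P\<close> nor the hypotheses \<open>S \<subseteq> {0..}\<close>,
  \<open>S \<noteq> {}\<close> are needed.\<close>

lemma eventually_at_right_0_quadratic_less:
  fixes a b c a' b' c' :: real
  assumes "(a, b, c) < (a', b', c')"
  shows "\<forall>\<^sub>F t in at_right 0. a + t*b + t^2*c < a' + t*b' + t^2*c'"
proof -
  have pos: "\<forall>\<^sub>F t in at_right 0. (0::real) < t"
    by (rule eventually_at_right_less)
  have lim: "((\<lambda>t. (b' - b) + t*(c' - c)) \<longlongrightarrow> b' - b) (at_right 0)"
    "((\<lambda>t. (a' - a) + t*((b' - b) + t*(c' - c))) \<longlongrightarrow> a' - a) (at_right 0)"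
    by (auto intro!: tendsto_eq_intros)
  have "\<forall>\<^sub>F t in at_right 0. 0 < (a' - a) + t*((b' - b) + t*(c' - c))"
    using assms unfolding less_prod_def' prod.sel
  proof (elim disjE conjE)
    assume "a < a'"
    then show ?thesis by (intro order_tendstoD(1)[OF lim(2)]) simp
  next
    assume "a = a'" "b < b'"
    with order_tendstoD(1)[OF lim(1)] have "\<forall>\<^sub>F t in at_right 0. 0 < (b' - b) + t*(c' - c)"
      by simp
    with pos show ?thesis by eventually_elim (simp add: \<open>a = a'\<close>)
  next
    assume "a = a'" "b = b'" "c < c'"
    from pos show ?thesis by eventually_elim (simp add: \<open>a = a'\<close> \<open>b = b'\<close> \<open>c < c'\<close>)
  qed
  then show ?thesis
    by eventually_elim (simp add: power2_eq_square algebra_simps)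
qed

lemma eventually_at_right_0_quadratic_neq:
  fixes a b c a' b' c' :: real
  assumes "(a, b, c) \<noteq> (a', b', c')"
  shows "\<forall>\<^sub>F t in at_right 0. a + t*b + t^2*c \<noteq> a' + t*b' + t^2*c'"
  using assms
proof (cases rule: linorder_cases[of "(a, b, c)" "(a', b', c')"])
  case less
  from eventually_at_right_0_quadratic_less[OF this] show ?thesis
    by eventually_elim simp
next
  case greater
  from eventually_at_right_0_quadratic_less[OF this] show ?thesis
    by eventually_elim simp
qed simp

definition point_twin_free :: "'a set \<Rightarrow> ('a \<Rightarrow> real) \<Rightarrow> ('a \<Rightarrow> real) \<Rightarrow> bool" where
  "point_twin_free X l r \<longleftrightarrow>
     (\<forall>x\<in>X. \<forall>y\<in>X. x \<noteq> y \<longrightarrow> l x = r x \<longrightarrow> (l y, r y) \<noteq> (l x, r x))"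

lemma point_twin_free_if_twin_free: "twin_free X l r \<Longrightarrow> point_twin_free X l r"
  unfolding twin_free_def point_twin_free_def by metis

lemma point_twin_free_if_S_rep_zero_notin:
  assumes "S_rep S X P l r" and "0 \<notin> S"
  shows "point_twin_free X l r"
  using assms unfolding point_twin_free_def S_rep_def by force

lemma touching_midpoint_less:
  assumes "\<forall>x\<in>X. l x \<le> r x" and "point_twin_free X l r"
    and "x \<in> X" "y \<in> X" "x \<noteq> y" "r x = l y"
  shows "l x + r x < l y + r y"
proof (rule ccontr)
  assume "\<not> ?thesis"
  moreover have "l x \<le> r x" "l y \<le> r y"
    using assms by auto
  ultimately have "l x = r x" and "(l y, r y) = (l x, r x)"
    using \<open>r x = l y\<close> by auto
  with assms show False
    unfolding point_twin_free_def by blast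
qed

lemma S_rep_translate:
  assumes "S_rep S X P l r"
    and "\<forall>x\<in>X. \<forall>y\<in>X. r x < l y \<longleftrightarrow> r x + s x < l y + s y"
  shows "S_rep S X P (\<lambda>x. l x + s x) (\<lambda>x. r x + s x)"
  using assms unfolding S_rep_def interval_rep_def by auto

definition perturbation :: "('a \<Rightarrow> real) \<Rightarrow> ('a \<Rightarrow> real) \<Rightarrow> ('a \<Rightarrow> real) \<Rightarrow> real \<Rightarrow> 'a \<Rightarrow> real" where
  "perturbation l r g t x = t * - (l x + r x) + t^2 * g x"

lemma eventually_perturbation_separates_endpoints:
  assumes "g x \<noteq> g y"
  shows "\<forall>\<^sub>F t in at_right 0.
    {l x + perturbation l r g t x, r x + perturbation l r g t x} \<inter>
    {l y + perturbation l r g t y, r y + perturbation l r g t y} = {}"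
proof -
  have "\<forall>\<^sub>F t in at_right 0. u + t * - (l x + r x) + t^2 * g x \<noteq> v + t * - (l y + r y) + t^2 * g y"
    for u v
    by (rule eventually_at_right_0_quadratic_neq) (use assms in simp)
  then have "\<forall>\<^sub>F t in at_right 0. \<forall>u\<in>{l x, r x}. \<forall>v\<in>{l y, r y}.
      u + t * - (l x + r x) + t^2 * g x \<noteq> v + t * - (l y + r y) + t^2 * g y"
    by (intro eventually_ball_finite ballI) auto
  then show ?thesis
    by eventually_elim (auto simp: perturbation_def algebra_simps)
qed

lemma eventually_perturbation_preserves_precedence:
  assumes "\<forall>x\<in>X. l x \<le> r x" and "point_twin_free X l r" and "x \<in> X" "y \<in> X"
  shows "\<forall>\<^sub>F t in at_right 0.
    r x < l y \<longleftrightarrow> r x + perturbation l r g t x < l y + perturbation l r g t y"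
proof (cases "x = y")
  case True
  with assms show ?thesis by (simp add: not_less)
next
  case False
  let ?R = "\<lambda>t. r x + t * - (l x + r x) + t^2 * g x"
  let ?L = "\<lambda>t. l y + t * - (l y + r y) + t^2 * g y"
  consider "r x < l y" | "l y < r x" | "r x = l y" by linarith
  then have "\<forall>\<^sub>F t in at_right 0. r x < l y \<longleftrightarrow> ?R t < ?L t"
  proof cases
    case 1
    then have "\<forall>\<^sub>F t in at_right 0. ?R t < ?L t"
      by (intro eventually_at_right_0_quadratic_less) simp
    then show ?thesis by eventually_elim (use 1 in simp)
  next
    case 2
    then have "\<forall>\<^sub>F t in at_right 0. ?L t < ?R t"
      by (intro eventually_at_right_0_quadratic_less) simp
    then show ?thesis by eventually_elim (use 2 in simp)
  next
    case 3
    with touching_midpoint_less[OF assms(1,2,3,4) False]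
    have "\<forall>\<^sub>F t in at_right 0. ?L t < ?R t"
      by (intro eventually_at_right_0_quadratic_less) simp
    then show ?thesis by eventually_elim (use 3 in simp)
  qed
  then show ?thesis
    by eventually_elim (simp add: perturbation_def algebra_simps)
qed

lemma distinguishing_S_rep_if_point_twin_free:
  assumes "finite X" and rep: "S_rep S X P l r" and "point_twin_free X l r"
  shows "\<exists>l r. S_rep S X P l r \<and> distinguishing X l r"
proof -
  obtain g :: "'a \<Rightarrow> nat" where g: "inj_on g X"
    using finite_imp_inj_to_nat_seg[OF \<open>finite X\<close>] by blast
  have lr: "\<forall>x\<in>X. l x \<le> r x"
    using rep unfolding S_rep_def interval_rep_def by blast
  let ?s = "perturbation l r (\<lambda>x. real (g x))"
  let ?L = "\<lambda>t x. l x + ?s t x" and ?R = "\<lambda>t x. r x + ?s t x"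
  have "\<forall>\<^sub>F t in at_right 0. \<forall>x\<in>X. \<forall>y\<in>X. r x < l y \<longleftrightarrow> ?R t x < ?L t y"
    using \<open>finite X\<close> \<open>point_twin_free X l r\<close>
    by (intro eventually_ball_finite ballI eventually_perturbation_preserves_precedence[OF lr])
  then have S_rep_eventually: "\<forall>\<^sub>F t in at_right 0. S_rep S X P (?L t) (?R t)"
    by eventually_elim (rule S_rep_translate[OF rep])
  have "\<forall>\<^sub>F t in at_right 0. x \<noteq> y \<longrightarrow> {?L t x, ?R t x} \<inter> {?L t y, ?R t y} = {}"
    if "x \<in> X" "y \<in> X" for x y
  proof (cases "x = y")
    case False
    with that g have "real (g x) \<noteq> real (g y)"
      by (auto dest: inj_onD)
    from eventually_perturbation_separates_endpoints[where l = l and r = r, OF this]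
    show ?thesis
      by eventually_elim simp
  qed simp
  with \<open>finite X\<close> have distinguishing_eventually:
      "\<forall>\<^sub>F t in at_right 0. distinguishing X (?L t) (?R t)"
    unfolding distinguishing_def by (intro eventually_ball_finite ballI)
  from eventually_conj[OF S_rep_eventually distinguishing_eventually] show ?thesis
    using eventually_happens' trivial_limit_at_right_real by blast
qed

theorem theorem3p2:
  fixes S :: "real set" and X :: "'a set" and P :: "'a \<Rightarrow> 'a \<Rightarrow> bool"
  assumes "S \<subseteq> {0..}" and "S \<noteq> {}"
    and "finite X" and "strict_poset X P" and "in_C S X P"
  shows "((\<exists>l r. S_rep S X P l r \<and> twin_free X l r) \<longrightarrow>
            (\<exists>l r. S_rep S X P l r \<and> distinguishing X l r))
       \<and> (0 \<notin> S \<longrightarrow> (\<exists>l r. S_rep S X P l r \<and> distinguishing X l r))"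
proof (intro conjI impI)
  assume "\<exists>l r. S_rep S X P l r \<and> twin_free X l r"
  then obtain l r where "S_rep S X P l r" and "twin_free X l r" by blast
  then show "\<exists>l r. S_rep S X P l r \<and> distinguishing X l r"
    by (intro distinguishing_S_rep_if_point_twin_free[OF \<open>finite X\<close>]
          point_twin_free_if_twin_free)
next
  assume "0 \<notin> S"
  obtain l r where "S_rep S X P l r"
    using \<open>in_C S X P\<close> unfolding in_C_def by blast
  with \<open>0 \<notin> S\<close> show "\<exists>l r. S_rep S X P l r \<and> distinguishing X l r"
    by (intro distinguishing_S_rep_if_point_twin_free[OF \<open>finite X\<close>]
          point_twin_free_if_S_rep_zero_notin)
qed

end
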